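(* Let $f\in\mathbb{F}[V]$ be an isobaric polynomial of weight $\lambda\in\mathbb{Z}/(q-1)\mathbb{Z}$ whose $P$-orbit $fP$ has $|fP|=|P|$ (i.e., the stabiliser of $f$ in $P$ is trivial). Then the orbit product $\prod fP=\prod_{\sigma\in P}f\sigma$ is isobaric of weight $\lambda$.
   Context: Let $p>2$ be a prime, $q=p^n$, and $\mathbb{F}$ a field of characteristic $p$ containing $\mathbb{F}_q$. Let $\mathbb{F}[V]=\mathbb{F}[a_0,a_1,a_2]$. For $c\in\mathbb{F}_q$ let $\sigma_c=\begin{pmatrix}1&c\\0&1\end{pmatrix}$, acting on the right on $\mathbb{F}[a_0,a_1,a_2]$ by the algebra automorphism $a_2\mapsto a_2+2ca_1+c^2a_0$, $a_1\mapsto a_1+ca_0$, $a_0\mapsto a_0$, and let $P=\{\sigma_c: c\in\mathbb{F}_q\}$. The weight of a monomial $a_0^{e_0}a_1^{e_1}a_2^{e_2}$ is $e_1+2e_2$ taken in $\mathbb{Z}/(q-1)\mathbb{Z}$ (i.e., $\mathrm{wt}(a_i)=i$, extended multiplicatively-to-additively); a polynomial is isobaric of weight $\lambda$ if all its monomials have weight $\lambda$. *)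

theory Defs
  imports "HOL-Library.Poly_Mapping" "HOL-Library.Product_Plus" "HOL-Computational_Algebra.Primes"
begin

text \<open>Polynomials in F[a0,a1,a2], represented by their coefficient function on exponent
  triples (e0,e1,e2) with finite support.\<close>
type_synonym 'a mpoly3 = "(nat \<times> nat \<times> nat) \<Rightarrow>\<^sub>0 'a"

definition const3 :: "'a::comm_ring_1 \<Rightarrow> 'a mpoly3" where
  "const3 c = Poly_Mapping.single (0,0,0) c"

definition A0 :: "'a::comm_ring_1 mpoly3" where "A0 = Poly_Mapping.single (1,0,0) 1"
definition A1 :: "'a::comm_ring_1 mpoly3" where "A1 = Poly_Mapping.single (0,1,0) 1"
definition A2 :: "'a::comm_ring_1 mpoly3" where "A2 = Poly_Mapping.single (0,0,1) 1"

definition Fq :: "nat \<Rightarrow> 'a::field set" where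
  "Fq q = {x. x ^ q = x}"

definition sigma_act :: "'a::comm_ring_1 \<Rightarrow> 'a mpoly3 \<Rightarrow> 'a mpoly3" where
  "sigma_act c f = (\<Sum>m\<in>Poly_Mapping.keys f. case m of (e0, e1, e2) \<Rightarrow>
      const3 (Poly_Mapping.lookup f m) * A0 ^ e0 * (A1 + const3 c * A0) ^ e1
      * (A2 + const3 (2 * c) * A1 + const3 (c ^ 2) * A0) ^ e2)"

text \<open>Weight of the monomial a0^e0 a1^e1 a2^e2 (as an integer, to be read mod q-1).\<close>
definition wt :: "nat \<times> nat \<times> nat \<Rightarrow> int" where
  "wt m = (case m of (e0, e1, e2) \<Rightarrow> int e1 + 2 * int e2)"

definition isobaric :: "nat \<Rightarrow> int \<Rightarrow> 'a::zero mpoly3 \<Rightarrow> bool" where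
  "isobaric q lam f \<longleftrightarrow>
     (\<forall>m\<in>Poly_Mapping.keys f. wt m mod (int q - 1) = lam mod (int q - 1))"

end

theory Submission
  imports Defs "HOL-Computational_Algebra.Polynomial"
begin

text \<open>The diagonal torus element t acts by a_i \<mapsto> t^i a_i, i.e. it multiplies a monomial
  by t to the power of its weight, and it normalises P: conjugating sigma_c by it gives
  sigma_(c/t). If f is isobaric of weight lam, every unit t of F_q therefore maps
  f sigma_c to t^lam f sigma_(c/t), and since c \<mapsto> c/t permutes F_q, the orbit product is
  scaled by (t^lam)^q = t^lam. A monomial of weight mu in the product thus satisfies
  t^mu = t^lam for all q - 1 units t; as x^d = 1 has at most d roots, mu \<equiv> lam (mod q - 1).
  The product ranges over all of P.\<close>

definition wt_nat :: "nat \<times> nat \<times> nat \<Rightarrow> nat" where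
  "wt_nat m = (case m of (e0, e1, e2) \<Rightarrow> e1 + 2 * e2)"

lemma wt_nat_add: "wt_nat (a + b) = wt_nat a + wt_nat b"
  by (cases a; cases b) (auto simp: wt_nat_def)

lemma wt_eq_wt_nat: "wt m = int (wt_nat m)"
  by (cases m) (simp add: wt_def wt_nat_def)

definition torus_act :: "'a::comm_ring_1 \<Rightarrow> 'a mpoly3 \<Rightarrow> 'a mpoly3" where
  "torus_act t f = Abs_poly_mapping (\<lambda>m. t ^ wt_nat m * Poly_Mapping.lookup f m)"

lemma lookup_torus_act:
  "Poly_Mapping.lookup (torus_act t f) m = t ^ wt_nat m * Poly_Mapping.lookup f m"
proof -
  have "finite {m. t ^ wt_nat m * Poly_Mapping.lookup f m \<noteq> 0}"
    by (rule finite_subset[OF _ finite_keys[of f]]) (auto simp: in_keys_iff)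
  then show ?thesis unfolding torus_act_def by simp
qed

lemma torus_act_add: "torus_act t (f + g) = torus_act t f + torus_act t g"
  by (rule poly_mapping_eqI) (simp add: lookup_torus_act lookup_add algebra_simps)

lemma torus_act_zero: "torus_act t 0 = 0"
  by (rule poly_mapping_eqI) (simp add: lookup_torus_act)

lemma torus_act_sum: "torus_act t (\<Sum>i\<in>I. g i) = (\<Sum>i\<in>I. torus_act t (g i))"
  by (induction I rule: infinite_finite_induct) (auto simp: torus_act_add torus_act_zero)

lemma torus_act_single:
  "torus_act t (Poly_Mapping.single m x) = Poly_Mapping.single m (t ^ wt_nat m * x)"
  by (rule poly_mapping_eqI) (simp add: lookup_torus_act lookup_single when_def)

lemma poly_mapping_monomial_expansion:
  "f = (\<Sum>m\<in>Poly_Mapping.keys f. Poly_Mapping.single m (Poly_Mapping.lookup f m))"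
  by (rule poly_mapping_eqI) (simp add: lookup_sum lookup_single when_def in_keys_iff)

lemma torus_act_mult:
  "torus_act t (f * g) = torus_act t f * torus_act t (g :: 'a::comm_ring_1 mpoly3)"
proof -
  let ?F = "\<lambda>m. Poly_Mapping.single m (Poly_Mapping.lookup f m)"
  let ?G = "\<lambda>m. Poly_Mapping.single m (Poly_Mapping.lookup g m)"
  have single_mult: "torus_act t (?F a * ?G b) = torus_act t (?F a) * torus_act t (?G b)" for a b
    by (simp add: mult_single torus_act_single wt_nat_add power_add mult_ac)
  have "torus_act t (f * g) =
      torus_act t ((\<Sum>a\<in>Poly_Mapping.keys f. ?F a) * (\<Sum>b\<in>Poly_Mapping.keys g. ?G b))"
    using poly_mapping_monomial_expansion[of f] poly_mapping_monomial_expansion[of g] by simp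
  also have "\<dots> = (\<Sum>a\<in>Poly_Mapping.keys f. \<Sum>b\<in>Poly_Mapping.keys g.
      torus_act t (?F a) * torus_act t (?G b))"
    by (simp add: sum_product torus_act_sum single_mult)
  also have "\<dots> =
      torus_act t (\<Sum>a\<in>Poly_Mapping.keys f. ?F a) * torus_act t (\<Sum>b\<in>Poly_Mapping.keys g. ?G b)"
    by (simp add: sum_product torus_act_sum)
  finally show ?thesis
    by (simp flip: poly_mapping_monomial_expansion)
qed

lemma torus_act_one: "torus_act t (1 :: 'a::comm_ring_1 mpoly3) = 1"
  using torus_act_single[of t 0 1] by (simp add: wt_nat_def zero_prod_def flip: single_one)

lemma torus_act_prod:
  "torus_act t (\<Prod>i\<in>I. g i) = (\<Prod>i\<in>I. torus_act t (g i :: 'a::comm_ring_1 mpoly3))"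
  by (induction I rule: infinite_finite_induct) (auto simp: torus_act_mult torus_act_one)

lemma torus_act_power: "torus_act t (g ^ k) = torus_act t (g :: 'a::comm_ring_1 mpoly3) ^ k"
  by (induction k) (auto simp: torus_act_mult torus_act_one)

lemma const3_mult: "const3 (a * b) = const3 a * (const3 b :: 'a::comm_ring_1 mpoly3)"
  by (simp add: const3_def mult_single)

lemma const3_one: "const3 1 = (1 :: 'a::comm_ring_1 mpoly3)"
  by (simp add: const3_def zero_prod_def flip: single_one)

lemma const3_power: "const3 (a ^ k) = (const3 a :: 'a::comm_ring_1 mpoly3) ^ k"
  by (induction k) (auto simp: const3_one const3_mult)

lemma lookup_const3_mult: "Poly_Mapping.lookup (const3 k * g) m = k * Poly_Mapping.lookup g m"
  unfolding const3_def zero_prod_def[symmetric] mult_map_scale_conv_mult[symmetric]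
  by (simp add: map.rep_eq when_def)

lemma torus_act_const3: "torus_act t (const3 k) = const3 k"
  unfolding const3_def torus_act_single by (simp add: wt_nat_def)

lemma torus_act_A0: "torus_act t A0 = A0"
  unfolding A0_def torus_act_single by (simp add: wt_nat_def)

lemma torus_act_A1: "torus_act t A1 = const3 t * A1"
  unfolding A1_def torus_act_single const3_def by (simp add: wt_nat_def mult_single)

lemma torus_act_A2: "torus_act t A2 = const3 (t^2) * A2"
  unfolding A2_def torus_act_single const3_def by (simp add: wt_nat_def mult_single)

lemma torus_act_shifted_A1:
  assumes "(t::'a::field) \<noteq> 0"
  shows "torus_act t (A1 + const3 c * A0) = const3 t * (A1 + const3 (c/t) * A0)"
proof -
  have "const3 t * const3 (c/t) = (const3 c :: 'a mpoly3)"
    using assms by (simp flip: const3_mult)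
  then show ?thesis
    by (simp add: torus_act_add torus_act_mult torus_act_const3 torus_act_A0 torus_act_A1
        algebra_simps flip: mult.assoc)
qed

lemma torus_act_shifted_A2:
  assumes "(t::'a::field) \<noteq> 0"
  shows "torus_act t (A2 + const3 (2*c) * A1 + const3 (c^2) * A0) =
    const3 (t^2) * (A2 + const3 (2*(c/t)) * A1 + const3 ((c/t)^2) * A0)"
proof -
  have "const3 (t^2) * const3 (2*(c/t)) = (const3 (2*c) * const3 t :: 'a mpoly3)"
    using assms by (simp add: power2_eq_square mult_ac flip: const3_mult)
  moreover have "const3 (t^2) * const3 ((c/t)^2) = (const3 (c^2) :: 'a mpoly3)"
    using assms by (simp add: power2_eq_square flip: const3_mult)
  ultimately show ?thesis
    by (simp add: torus_act_add torus_act_mult torus_act_const3 torus_act_A0 torus_act_A1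
        torus_act_A2 algebra_simps flip: mult.assoc)
qed

lemma torus_act_sigma_act:
  assumes "(t::'a::field) \<noteq> 0"
    and weight: "\<And>m. m \<in> Poly_Mapping.keys f \<Longrightarrow> t ^ wt_nat m = t ^ w"
  shows "torus_act t (sigma_act c f) = const3 (t ^ w) * sigma_act (c / t) f"
  unfolding sigma_act_def torus_act_sum sum_distrib_left
proof (rule sum.cong[OF refl])
  fix m assume m: "m \<in> Poly_Mapping.keys f"
  obtain e0 e1 e2 where m_eq: "m = (e0, e1, e2)" by (cases m)
  have "t ^ (e1 + 2 * e2) = t ^ w" using weight[OF m] by (simp add: m_eq wt_nat_def)
  then have weight_factor: "const3 t ^ e1 * (const3 t ^ 2) ^ e2 = (const3 t ^ w :: 'a mpoly3)"
    by (simp add: power_add power_mult flip: const3_power const3_mult)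
  then show "torus_act t (case m of (e0, e1, e2) \<Rightarrow>
      const3 (Poly_Mapping.lookup f m) * A0 ^ e0 * (A1 + const3 c * A0) ^ e1
      * (A2 + const3 (2 * c) * A1 + const3 (c ^ 2) * A0) ^ e2) =
    const3 (t ^ w) * (case m of (e0, e1, e2) \<Rightarrow>
      const3 (Poly_Mapping.lookup f m) * A0 ^ e0 * (A1 + const3 (c / t) * A0) ^ e1
      * (A2 + const3 (2 * (c / t)) * A1 + const3 ((c / t) ^ 2) * A0) ^ e2)"
    unfolding m_eq prod.case torus_act_mult torus_act_power torus_act_const3 torus_act_A0
      torus_act_shifted_A1[OF assms(1)] torus_act_shifted_A2[OF assms(1)]
    by (simp add: power_mult_distrib const3_power mult_ac flip: weight_factor)
qed

lemma power_eq_power_mod: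
  assumes "(x::'a::monoid_mult) ^ d = 1"
  shows "x ^ k = x ^ (k mod d)"
proof -
  have "x ^ k = (x ^ d) ^ (k div d) * x ^ (k mod d)"
    by (simp flip: power_mult power_add)
  then show ?thesis using assms by simp
qed

lemma
  assumes "d > 0"
  shows finite_roots_of_unity: "finite {x::'a::idom. x ^ d = 1}"
    and card_roots_of_unity_le: "card {x::'a::idom. x ^ d = 1} \<le> d"
proof -
  define P :: "'a poly" where "P = monom 1 d - 1"
  have "coeff P d = 1" using assms by (simp add: P_def)
  then have "P \<noteq> 0" by auto
  have roots: "{x. x ^ d = 1} = {x. poly P x = 0}"
    by (simp add: P_def poly_monom)
  then show "finite {x::'a. x ^ d = 1}"
    using poly_roots_finite[OF \<open>P \<noteq> 0\<close>] by simp
  have "card {x. poly P x = 0} \<le> degree P" by (rule card_poly_roots_bound[OF \<open>P \<noteq> 0\<close>])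
  also have "\<dots> \<le> d" unfolding P_def
    by (rule degree_diff_le) (auto simp: degree_monom_le)
  finally show "card {x::'a. x ^ d = 1} \<le> d" unfolding roots .
qed

lemma Fq_unit_power_pred:
  assumes "t \<in> Fq q" "(t::'a::field) \<noteq> 0" "q \<ge> 1"
  shows "t ^ (q - 1) = 1"
proof -
  have "t * t ^ (q - 1) = t * 1"
    using assms by (simp add: Fq_def flip: power_Suc)
  then show ?thesis using assms(2) by simp
qed

lemma Fq_divide_bij:
  assumes "t \<in> Fq q" "(t::'a::field) \<noteq> 0"
  shows "bij_betw (\<lambda>c. c / t) (Fq q) (Fq q)"
  by (rule bij_betw_byWitness[where f' = "\<lambda>c. c * t"])
    (use assms in \<open>auto simp: Fq_def power_divide power_mult_distrib\<close>)

lemma Fq_unit_powers_eq_imp_eq: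
  assumes card: "card (Fq q :: 'a::field set) = q" and "q \<ge> 2"
    and "r < q - 1" "w < q - 1"
    and eq: "\<And>t::'a. t \<in> Fq q - {0} \<Longrightarrow> t ^ r = t ^ w"
  shows "r = w"
proof (rule ccontr)
  have units_card: "card (Fq q - {0::'a}) = q - 1"
    using card \<open>q \<ge> 2\<close> by (simp add: Fq_def zero_power card_ge_0_finite)
  assume "r \<noteq> w"
  define d where "d = max r w - min r w"
  have "d > 0" "d < q - 1" using \<open>r \<noteq> w\<close> assms(3,4) by (auto simp: d_def)
  have "Fq q - {0} \<subseteq> {x::'a. x ^ d = 1}"
  proof
    fix t :: 'a assume t: "t \<in> Fq q - {0}"
    have "t ^ min r w * t ^ d = t ^ min r w * 1"
      using eq[OF t] by (auto simp: d_def min_def max_def simp flip: power_add)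
    then show "t \<in> {x. x ^ d = 1}" using t by simp
  qed
  then have "q - 1 \<le> card {x::'a. x ^ d = 1}"
    unfolding units_card[symmetric]
    by (rule card_mono[OF finite_roots_of_unity[OF \<open>d > 0\<close>]])
  with card_roots_of_unity_le[OF \<open>d > 0\<close>, where 'a = 'a] \<open>d < q - 1\<close> show False
    by linarith
qed

lemma wt_mod_eq_wt_nat_mod: "q \<ge> 1 \<Longrightarrow> wt m mod (int q - 1) = int (wt_nat m mod (q - 1))"
  by (simp add: wt_eq_wt_nat of_nat_mod of_nat_diff)

lemma wt_nat_mod_eq_if_isobaric:
  assumes "isobaric q lam f" "m \<in> Poly_Mapping.keys f" "q \<ge> 1"
  shows "wt_nat m mod (q - 1) = nat (lam mod (int q - 1))"
proof -
  have "int (wt_nat m mod (q - 1)) = wt m mod (int q - 1)"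
    using \<open>q \<ge> 1\<close> by (simp add: wt_mod_eq_wt_nat_mod)
  also have "\<dots> = lam mod (int q - 1)"
    using assms(1,2) by (simp add: isobaric_def)
  finally show ?thesis by simp
qed

lemma torus_act_orbit_prod:
  fixes f :: "'a::field mpoly3"
  assumes card: "card (Fq q :: 'a set) = q" and "q \<ge> 2"
    and "isobaric q lam f" and t: "t \<in> Fq q" "t \<noteq> 0"
  defines "w \<equiv> nat (lam mod (int q - 1))"
  shows "torus_act t (\<Prod>c\<in>Fq q. sigma_act c f) = const3 (t ^ w) * (\<Prod>c\<in>Fq q. sigma_act c f)"
proof -
  have "t ^ wt_nat m = t ^ w" if "m \<in> Poly_Mapping.keys f" for m
    using power_eq_power_mod[OF Fq_unit_power_pred[OF t], of "wt_nat m"] \<open>q \<ge> 2\<close>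
      wt_nat_mod_eq_if_isobaric[OF \<open>isobaric q lam f\<close> that] by (simp add: w_def)
  then have "torus_act t (\<Prod>c\<in>Fq q. sigma_act c f) =
      (\<Prod>c\<in>Fq q. const3 (t ^ w) * sigma_act (c / t) f)"
    by (simp add: torus_act_prod torus_act_sigma_act t(2))
  also have "\<dots> = const3 (t ^ w) ^ q * (\<Prod>c\<in>Fq q. sigma_act (c / t) f)"
    unfolding prod.distrib prod_constant card ..
  also have "(\<Prod>c\<in>Fq q. sigma_act (c / t) f) = (\<Prod>c\<in>Fq q. sigma_act c f)"
    using prod.reindex_bij_betw[OF Fq_divide_bij[OF t], of "\<lambda>c. sigma_act c f"] by simp
  also have "const3 (t ^ w) ^ q = (const3 (t ^ w) :: 'a mpoly3)"
  proof -
    have "(t ^ w) ^ q = (t ^ q) ^ w" by (simp flip: power_mult add: mult.commute)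
    also have "\<dots> = t ^ w" using t(1) by (simp add: Fq_def)
    finally have "(t ^ w) ^ q = t ^ w" .
    then show ?thesis by (simp flip: const3_power)
  qed
  finally show ?thesis .
qed

lemma isobaric_if_torus_act_eq:
  assumes card: "card (Fq q :: 'a::field set) = q" and "q \<ge> 2"
    and semi_invariant: "\<And>t. t \<in> Fq q - {0} \<Longrightarrow>
      torus_act t g = const3 (t ^ nat (lam mod (int q - 1))) * (g :: 'a mpoly3)"
  shows "isobaric q lam g"
  unfolding isobaric_def
proof
  fix m assume "m \<in> Poly_Mapping.keys g"
  then have g_m: "Poly_Mapping.lookup g m \<noteq> 0" by (simp add: in_keys_iff)
  define w where "w = nat (lam mod (int q - 1))"
  have "w < q - 1" using \<open>q \<ge> 2\<close> by (simp add: w_def nat_less_iff of_nat_diff)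
  have "t ^ (wt_nat m mod (q - 1)) = t ^ w" if t: "t \<in> Fq q - {0}" for t :: 'a
  proof -
    have "t ^ wt_nat m * Poly_Mapping.lookup g m = t ^ w * Poly_Mapping.lookup g m"
      using arg_cong[OF semi_invariant[OF t], of "\<lambda>h. Poly_Mapping.lookup h m"]
      by (simp add: lookup_torus_act lookup_const3_mult w_def)
    then show ?thesis
      using g_m power_eq_power_mod[OF Fq_unit_power_pred, of t q "wt_nat m"] t \<open>q \<ge> 2\<close> by simp
  qed
  then have "wt_nat m mod (q - 1) = w"
    using Fq_unit_powers_eq_imp_eq[OF card \<open>q \<ge> 2\<close> _ \<open>w < q - 1\<close>] \<open>q \<ge> 2\<close> by simp
  then show "wt m mod (int q - 1) = lam mod (int q - 1)"
    using \<open>q \<ge> 2\<close> by (simp add: w_def wt_mod_eq_wt_nat_mod)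
qed

theorem lemma2p1:
  fixes p n q :: nat and f :: "'a::field mpoly3" and lam :: int
  assumes "prime p" and "p > 2" and "n \<ge> 1" and "q = p ^ n"
    and "CHAR('a) = p"
    and "card (Fq q :: 'a set) = q"
    and "isobaric q lam f"
    and "card ((\<lambda>c. sigma_act c f) ` (Fq q :: 'a set)) = card (Fq q :: 'a set)"
  shows "isobaric q lam (\<Prod>c\<in>(Fq q :: 'a set). sigma_act c f)"
proof -
  have "p \<le> p ^ n" using \<open>p > 2\<close> \<open>n \<ge> 1\<close> by (simp add: self_le_power)
  then have "q \<ge> 2" using \<open>p > 2\<close> \<open>q = p ^ n\<close> by simp
  show ?thesis
    using torus_act_orbit_prod[OF \<open>card (Fq q) = q\<close> \<open>q \<ge> 2\<close> \<open>isobaric q lam f\<close>]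
    by (intro isobaric_if_torus_act_eq[OF \<open>card (Fq q) = q\<close> \<open>q \<ge> 2\<close>]) auto
qed

end
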